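(* Let $n\ge1$, $0<\rho<1$, $\varepsilon>0$, and consider $$x_k - C_n^1\rho\, x_{k-1} + C_n^2\rho^2 x_{k-2} - \dots + (-1)^n\rho^n x_{k-n}=v_k,\qquad k=n,n+1,\dots,$$ (characteristic polynomial $(\lambda-\rho)^n$), with initial conditions $x^{(0)}=(x_0,\dots,x_{n-1})$. Fix $t\ge n$. Then the maximum of $x_t$ over all $x^{(0)}$ with $\|x^{(0)}\|_\infty\le1$ and all sequences with $|v_k|\le\varepsilon$ ($k=n,\dots,t$) is attained at $x^{(0)}=((-1)^{n-1},\dots,-1,1)$ (i.e. $x_i=(-1)^{n-1-i}$) and $v_k=\varepsilon$ for $k=n,\dots,t$, and equals $$\alpha_{t,n}+\varepsilon\sum_{k=n}^{t}C_{t-k+n-1}^{n-1}\rho^{t-k},$$ which is strictly less than $\alpha_n+\varepsilon(1-\rho)^{-n}$.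
   Context: $C_p^q=\frac{p!}{q!(p-q)!}$. For $k\ge n$, $\alpha_{k,n}=\sum_{i=0}^{n-1}|P_i(k)|\rho^{k-i}$ where $P_i(k)=\prod_{j\in\{0,\dots,n-1\},j\ne i}\frac{k-j}{i-j}$, and $\alpha_n=\max_{k\ge n}\alpha_{k,n}$. *)

theory Defs
  imports Complex_Main
begin

definition lagrP :: "nat \<Rightarrow> nat \<Rightarrow> nat \<Rightarrow> real" where
  "lagrP n i k = (\<Prod>j\<in>{0..<n} - {i}. (real k - real j) / (real i - real j))"

definition alpha_kn :: "real \<Rightarrow> nat \<Rightarrow> nat \<Rightarrow> real" where
  "alpha_kn \<rho> k n = (\<Sum>i<n. \<bar>lagrP n i k\<bar> * \<rho> ^ (k - i))"

definition alpha_n :: "real \<Rightarrow> nat \<Rightarrow> real" where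
  "alpha_n \<rho> n = (SUP k\<in>{n..}. alpha_kn \<rho> k n)"

definition satisfies_rec :: "nat \<Rightarrow> real \<Rightarrow> nat \<Rightarrow> (nat \<Rightarrow> real) \<Rightarrow> (nat \<Rightarrow> real) \<Rightarrow> bool" where
  "satisfies_rec n \<rho> t x v \<longleftrightarrow>
     (\<forall>k. n \<le> k \<and> k \<le> t \<longrightarrow>
        (\<Sum>j\<le>n. (-1) ^ j * real (n choose j) * \<rho> ^ j * x (k - j)) = v k)"

end

theory Submission
  imports Defs "HOL-Real_Asymp.Real_Asymp"
begin

text \<open>
  Every solution of the recurrence has the form
    x k = \<rho>^k Q(k) + (\<Sum>m=n..k. C(k-m+n-1, n-1) \<rho>^(k-m) v m),
  where Q is the polynomial of degree < n interpolating x i / \<rho>^i at the nodes 0, ..., n-1: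
  the operator of the recurrence kills \<rho>^k Q(k) because the n-th finite difference of a
  polynomial of degree < n vanishes, and the binomial weights are its impulse response.
  So x t is linear in the data, with the coefficient P_i(t) \<rho>^(t-i) of x i having the sign
  (-1)^(n-1-i) (all nodes lie below t) and all coefficients of the v m nonnegative.  The maximum
  is therefore attained at the alternating initial values and v = \<epsilon>, and the \<epsilon>-term is a
  partial sum of the series \<Sum>m. C(m+n-1, n-1) \<rho>^m = (1-\<rho>)^(-n).
\<close>

section \<open>Finite differences\<close>

text \<open>Functions with vanishing \<open>n\<close>-th difference stand in for polynomials of degree \<open>< n\<close>.\<close>

fun fdiff_vanishes :: "nat \<Rightarrow> (real \<Rightarrow> real) \<Rightarrow> bool" where
  "fdiff_vanishes 0 f \<longleftrightarrow> (\<forall>x. f x = 0)"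
| "fdiff_vanishes (Suc n) f \<longleftrightarrow> fdiff_vanishes n (\<lambda>x. f (x + 1) - f x)"

lemma fdiff_vanishes_zero: "fdiff_vanishes n (\<lambda>x. 0)"
  by (induction n) auto

lemma fdiff_vanishes_add:
  "fdiff_vanishes n f \<Longrightarrow> fdiff_vanishes n g \<Longrightarrow> fdiff_vanishes n (\<lambda>x. f x + g x)"
proof (induction n arbitrary: f g)
  case (Suc n)
  have "fdiff_vanishes n (\<lambda>x. (f (x + 1) - f x) + (g (x + 1) - g x))"
    using Suc by simp
  then show ?case by (simp add: algebra_simps)
qed simp

lemma fdiff_vanishes_cmult: "fdiff_vanishes n f \<Longrightarrow> fdiff_vanishes n (\<lambda>x. c * f x)"
proof (induction n arbitrary: f)
  case (Suc n)
  have "fdiff_vanishes n (\<lambda>x. c * (f (x + 1) - f x))"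
    using Suc by simp
  then show ?case by (simp add: algebra_simps)
qed simp

lemma fdiff_vanishes_sum:
  "finite A \<Longrightarrow> (\<And>i. i \<in> A \<Longrightarrow> fdiff_vanishes n (f i))
    \<Longrightarrow> fdiff_vanishes n (\<lambda>x. \<Sum>i\<in>A. f i x)"
  by (induction A rule: finite_induct) (auto intro: fdiff_vanishes_add fdiff_vanishes_zero)

lemma fdiff_vanishes_mult_linear:
  "fdiff_vanishes n f \<Longrightarrow> fdiff_vanishes (Suc n) (\<lambda>x. f x * (a * x + b))"
proof (induction n arbitrary: f b)
  case (Suc n)
  have "fdiff_vanishes (Suc n) (\<lambda>x. (f (x + 1) - f x) * (a * x + (a + b)) + a * f x)"
    using Suc.IH[of "\<lambda>x. f (x + 1) - f x"] Suc.prems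
    by (intro fdiff_vanishes_add fdiff_vanishes_cmult) auto
  moreover have "(\<lambda>x. (f (x + 1) - f x) * (a * x + (a + b)) + a * f x)
      = (\<lambda>x. f (x + 1) * (a * (x + 1) + b) - f x * (a * x + b))"
    by (auto simp: algebra_simps)
  ultimately show ?case by simp
qed simp

lemma fdiff_vanishes_prod_linear:
  "finite S \<Longrightarrow> fdiff_vanishes (Suc (card S)) (\<lambda>x. \<Prod>j\<in>S. a j * x + b j)"
proof (induction S rule: finite_induct)
  case (insert j S)
  then show ?case
    using fdiff_vanishes_mult_linear[OF insert.IH, of "a j" "b j"] by (simp add: mult.commute)
qed simp

lemma alternating_choose_sum_Suc:
  fixes F :: "nat \<Rightarrow> real"
  shows "(\<Sum>j\<le>Suc n. (-1)^j * real (Suc n choose j) * F j)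
       = (\<Sum>j\<le>n. (-1)^j * real (n choose j) * (F j - F (Suc j)))"
proof -
  have "(\<Sum>j\<le>Suc n. (-1)^j * real (Suc n choose j) * F j)
      = F 0 + (\<Sum>j\<le>n. (-1)^Suc j * real (n choose Suc j) * F (Suc j)
                          - (-1)^j * real (n choose j) * F (Suc j))"
    by (subst sum.atMost_Suc_shift) (auto simp: algebra_simps intro!: sum.cong)
  also have "\<dots> = (F 0 + (\<Sum>j\<le>n. (-1)^Suc j * real (n choose Suc j) * F (Suc j)))
      - (\<Sum>j\<le>n. (-1)^j * real (n choose j) * F (Suc j))"
    by (simp add: sum_subtractf)
  also have "F 0 + (\<Sum>j\<le>n. (-1)^Suc j * real (n choose Suc j) * F (Suc j))
      = (\<Sum>j\<le>n. (-1)^j * real (n choose j) * F j)"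
    using sum.atMost_Suc_shift[of "\<lambda>j. (-1)^j * real (n choose j) * F j" n]
    by (simp add: binomial_eq_0)
  finally show ?thesis
    by (simp add: sum_subtractf right_diff_distrib)
qed

lemma alternating_choose_sum_eq_0:
  "fdiff_vanishes n f \<Longrightarrow> (\<Sum>j\<le>n. (-1)^j * real (n choose j) * f (a - real j)) = 0"
proof (induction n arbitrary: f a)
  case (Suc n)
  have "(\<Sum>j\<le>Suc n. (-1)^j * real (Suc n choose j) * f (a - real j))
      = (\<Sum>j\<le>n. (-1)^j * real (n choose j) * (f (a - real j) - f (a - real (Suc j))))"
    by (rule alternating_choose_sum_Suc)
  also have "\<dots> = (\<Sum>j\<le>n. (-1)^j * real (n choose j) * (\<lambda>x. f (x + 1) - f x) ((a - 1) - real j))"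
    by (simp add: algebra_simps)
  also have "\<dots> = 0"
    using Suc.IH[of "\<lambda>x. f (x + 1) - f x" "a - 1"] Suc.prems by simp
  finally show ?case .
qed simp

definition lagrange_basis :: "nat \<Rightarrow> nat \<Rightarrow> real \<Rightarrow> real" where
  "lagrange_basis n i z = (\<Prod>j\<in>{0..<n} - {i}. (z - real j) / (real i - real j))"

lemma lagrP_eq_lagrange_basis: "lagrP n i k = lagrange_basis n i (real k)"
  by (simp add: lagrP_def lagrange_basis_def)

lemma fdiff_vanishes_lagrange_basis:
  assumes "i < n"
  shows "fdiff_vanishes n (lagrange_basis n i)"
proof -
  have "fdiff_vanishes (Suc (card ({0..<n} - {i})))
          (\<lambda>z. \<Prod>j\<in>{0..<n} - {i}. 1 / (real i - real j) * z + - real j / (real i - real j))"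
    by (rule fdiff_vanishes_prod_linear) simp
  moreover have "Suc (card ({0..<n} - {i})) = n"
    using assms by simp
  ultimately show ?thesis
    unfolding lagrange_basis_def[abs_def] by (simp add: diff_divide_distrib)
qed

lemma lagrange_basis_node:
  assumes "k < n" "i < n"
  shows "lagrange_basis n i (real k) = (if i = k then 1 else 0)"
  using assms unfolding lagrange_basis_def by (auto intro: prod_zero)

text \<open>\<open>z \<mapsto> C(z+n-1, n-1)\<close> as a polynomial in \<open>z\<close>.  Its roots \<open>-1, \<dots>, -(n-1)\<close> are exactly
  where the impulse response vanishes just before its support, so one polynomial describes it
  on the whole window of the recurrence.\<close>
definition shifted_binomial :: "nat \<Rightarrow> real \<Rightarrow> real" where
  "shifted_binomial n z = pochhammer (z + 1) (n - 1) / fact (n - 1)"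

lemma fdiff_vanishes_shifted_binomial:
  assumes "n \<ge> 1"
  shows "fdiff_vanishes n (shifted_binomial n)"
proof -
  have "fdiff_vanishes (Suc (card {..<n - 1})) (\<lambda>z. \<Prod>i<n - 1. 1 * z + (1 + real i))"
    by (rule fdiff_vanishes_prod_linear) simp
  then have "fdiff_vanishes n (\<lambda>z. 1 / fact (n - 1) * pochhammer (z + 1) (n - 1))"
    using assms by (intro fdiff_vanishes_cmult) (simp add: pochhammer_prod atLeast0LessThan add_ac)
  then show ?thesis
    unfolding shifted_binomial_def[abs_def] by simp
qed

lemma shifted_binomial_of_nat:
  assumes "n \<ge> 1"
  shows "real ((a + n - 1) choose (n - 1)) = shifted_binomial n (real a)"
proof -
  have "real ((a + n - 1) choose (n - 1)) = real (a + n - 1) gchoose (n - 1)"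
    by (rule binomial_gbinomial)
  also have "\<dots> = pochhammer (real (a + n - 1) - real (n - 1) + 1) (n - 1) / fact (n - 1)"
    by (rule gbinomial_pochhammer')
  finally show ?thesis
    using assms by (simp add: shifted_binomial_def)
qed

lemma shifted_binomial_neg:
  assumes "1 \<le> e" "e \<le> n - 1"
  shows "shifted_binomial n (- real e) = 0"
proof -
  have arg: "- real e + 1 = - real (e - 1)"
    using assms(1) by simp
  have "pochhammer (- real (e - 1)) (n - 1) = (0::real)"
    using assms by (intro pochhammer_eq_0_iff[THEN iffD2] exI[of _ "e - 1"]) simp
  then show ?thesis
    unfolding shifted_binomial_def arg by simp
qed

section \<open>Solving the recurrence\<close>

text \<open>For \<open>k \<ge> n\<close> no truncated subtraction occurs in \<open>k - j\<close>.\<close>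
definition recurrence_lhs :: "nat \<Rightarrow> real \<Rightarrow> (nat \<Rightarrow> real) \<Rightarrow> nat \<Rightarrow> real" where
  "recurrence_lhs n \<rho> x k = (\<Sum>j\<le>n. (-1)^j * real (n choose j) * \<rho>^j * x (k - j))"

lemma satisfies_rec_iff:
  "satisfies_rec n \<rho> t x v \<longleftrightarrow> (\<forall>k. n \<le> k \<and> k \<le> t \<longrightarrow> recurrence_lhs n \<rho> x k = v k)"
  by (simp add: satisfies_rec_def recurrence_lhs_def)

lemma recurrence_lhs_add:
  "recurrence_lhs n \<rho> (\<lambda>k. x k + y k) k = recurrence_lhs n \<rho> x k + recurrence_lhs n \<rho> y k"
  by (simp add: recurrence_lhs_def sum.distrib algebra_simps)

lemma recurrence_lhs_Suc:
  "recurrence_lhs (Suc p) \<rho> x k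
     = x k + (\<Sum>j\<le>p. (-1)^Suc j * real (Suc p choose Suc j) * \<rho>^Suc j * x (k - Suc j))"
  unfolding recurrence_lhs_def by (subst sum.atMost_Suc_shift) simp

lemma recurrence_lhs_geometric_mult:
  assumes "fdiff_vanishes n q" "n \<le> k"
  shows "recurrence_lhs n \<rho> (\<lambda>k. \<rho>^k * q (real k)) k = 0"
proof -
  have "recurrence_lhs n \<rho> (\<lambda>k. \<rho>^k * q (real k)) k
      = \<rho>^k * (\<Sum>j\<le>n. (-1)^j * real (n choose j) * q (real k - real j))"
    unfolding recurrence_lhs_def sum_distrib_left
  proof (rule sum.cong)
    fix j assume "j \<in> {..n}"
    then have "j \<le> k" using assms by simp
    then have "\<rho>^k = \<rho>^j * \<rho>^(k - j)" by (simp add: power_add[symmetric])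
    with \<open>j \<le> k\<close> show "(-1)^j * real (n choose j) * \<rho>^j * (\<rho>^(k - j) * q (real (k - j)))
        = \<rho>^k * ((-1)^j * real (n choose j) * q (real k - real j))"
      by (simp add: of_nat_diff mult_ac)
  qed simp
  also have "\<dots> = 0"
    by (simp add: alternating_choose_sum_eq_0[OF assms(1)])
  finally show ?thesis .
qed

text \<open>The coefficients of \<open>(1 - \<rho>z)\<^sup>-\<^sup>n\<close>, shifted to start at \<open>m\<close>.\<close>
definition impulse_response :: "nat \<Rightarrow> real \<Rightarrow> nat \<Rightarrow> nat \<Rightarrow> real" where
  "impulse_response n \<rho> k m =
     (if m \<le> k then real ((k - m + n - 1) choose (n - 1)) * \<rho>^(k - m) else 0)"

lemma impulse_response_shifted_binomial:
  assumes "n \<ge> 1" "n \<le> s" "j \<le> n" "m < s"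
  shows "\<rho>^j * impulse_response n \<rho> (s - j) m
       = \<rho>^(s - m) * shifted_binomial n (real (s - m) - real j)"
proof (cases "j \<le> s - m")
  case True
  then have "s - m = j + (s - j - m)" "m \<le> s - j"
    using assms(4) by arith+
  then have power: "\<rho>^(s - m) = \<rho>^j * \<rho>^(s - j - m)"
    and response: "impulse_response n \<rho> (s - j) m
                    = real ((s - j - m + n - 1) choose (n - 1)) * \<rho>^(s - j - m)"
    by (metis power_add, simp add: impulse_response_def)
  have "real (s - j - m) = real (s - m) - real j"
    using True by linarith
  then have "real ((s - j - m + n - 1) choose (n - 1)) = shifted_binomial n (real (s - m) - real j)"
    using shifted_binomial_of_nat[OF assms(1), of "s - j - m"] by simp
  then show ?thesis
    unfolding power response by (simp only: mult_ac)
next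
  case False
  then have "impulse_response n \<rho> (s - j) m = 0"
    using assms by (simp add: impulse_response_def)
  moreover have "shifted_binomial n (- real (j - (s - m))) = 0"
    using False assms by (intro shifted_binomial_neg) auto
  ultimately show ?thesis
    using False by (simp add: of_nat_diff)
qed

lemma recurrence_lhs_impulse_response:
  assumes "n \<ge> 1" "n \<le> s"
  shows "recurrence_lhs n \<rho> (\<lambda>k. impulse_response n \<rho> k m) s = (if m = s then 1 else 0)"
proof -
  consider "s < m" | "m = s" | "m < s" by linarith
  then show ?thesis
  proof cases
    case 1
    then show ?thesis
      by (auto simp: recurrence_lhs_def impulse_response_def intro!: sum.neutral)
  next
    case 2
    obtain p where p: "n = Suc p" using assms(1) by (cases n) auto
    have "(\<Sum>j\<le>p. (-1)^Suc j * real (n choose Suc j) * \<rho>^Suc j * impulse_response n \<rho> (s - Suc j) m) = 0"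
      using 2 assms p by (intro sum.neutral) (auto simp: impulse_response_def)
    then show ?thesis
      using 2 p by (simp add: recurrence_lhs_Suc impulse_response_def)
  next
    case 3
    have "recurrence_lhs n \<rho> (\<lambda>k. impulse_response n \<rho> k m) s
        = \<rho>^(s - m) * (\<Sum>j\<le>n. (-1)^j * real (n choose j) * shifted_binomial n (real (s - m) - real j))"
      unfolding recurrence_lhs_def sum_distrib_left
      using impulse_response_shifted_binomial[OF assms _ 3]
      by (intro sum.cong) (simp_all add: mult_ac)
    also have "\<dots> = 0"
      using alternating_choose_sum_eq_0[OF fdiff_vanishes_shifted_binomial[OF assms(1)]] by simp
    finally show ?thesis
      using 3 by simp
  qed
qed

lemma recurrence_lhs_forced:
  assumes "n \<ge> 1" "n \<le> k" "k \<le> t"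
  shows "recurrence_lhs n \<rho> (\<lambda>k. \<Sum>m=n..t. impulse_response n \<rho> k m * v m) k = v k"
proof -
  have "recurrence_lhs n \<rho> (\<lambda>k. \<Sum>m=n..t. impulse_response n \<rho> k m * v m) k
      = (\<Sum>m=n..t. v m * recurrence_lhs n \<rho> (\<lambda>k. impulse_response n \<rho> k m) k)"
    unfolding recurrence_lhs_def sum_distrib_left
    by (subst sum.swap) (simp add: mult_ac)
  also have "\<dots> = v k"
    using assms by (simp add: recurrence_lhs_impulse_response if_distrib sum.delta cong: if_cong)
  finally show ?thesis .
qed

definition interpolant :: "nat \<Rightarrow> real \<Rightarrow> (nat \<Rightarrow> real) \<Rightarrow> real \<Rightarrow> real" where
  "interpolant n \<rho> x z = (\<Sum>i<n. x i / \<rho>^i * lagrange_basis n i z)"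

definition explicit_solution ::
    "nat \<Rightarrow> real \<Rightarrow> nat \<Rightarrow> (nat \<Rightarrow> real) \<Rightarrow> (nat \<Rightarrow> real) \<Rightarrow> nat \<Rightarrow> real" where
  "explicit_solution n \<rho> t x v k =
     \<rho>^k * interpolant n \<rho> x (real k) + (\<Sum>m=n..t. impulse_response n \<rho> k m * v m)"

lemma fdiff_vanishes_interpolant: "fdiff_vanishes n (interpolant n \<rho> x)"
  unfolding interpolant_def[abs_def]
  by (intro fdiff_vanishes_sum fdiff_vanishes_cmult fdiff_vanishes_lagrange_basis) auto

lemma explicit_solution_initial:
  assumes "k < n" "0 < \<rho>"
  shows "explicit_solution n \<rho> t x v k = x k"
proof -
  have "interpolant n \<rho> x (real k) = x k / \<rho>^k"
    using assms(1) by (simp add: interpolant_def lagrange_basis_node if_distrib sum.delta cong: if_cong)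
  moreover have "(\<Sum>m=n..t. impulse_response n \<rho> k m * v m) = 0"
    using assms(1) by (intro sum.neutral) (auto simp: impulse_response_def)
  ultimately show ?thesis
    using assms(2) by (simp add: explicit_solution_def)
qed

lemma satisfies_rec_explicit_solution:
  assumes "n \<ge> 1"
  shows "satisfies_rec n \<rho> t (explicit_solution n \<rho> t x v) v"
  unfolding satisfies_rec_iff explicit_solution_def[abs_def]
  using assms by (simp add: recurrence_lhs_add recurrence_lhs_forced
      recurrence_lhs_geometric_mult[OF fdiff_vanishes_interpolant])

lemma satisfies_rec_unique:
  assumes "n \<ge> 1" "satisfies_rec n \<rho> t x v" "satisfies_rec n \<rho> t y v"
    and "\<forall>i<n. x i = y i" "k \<le> t"
  shows "x k = y k"
  using assms(5)
proof (induction k rule: less_induct)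
  case (less k)
  show ?case
  proof (cases "k < n")
    case False
    obtain p where p: "n = Suc p" using assms(1) by (cases n) auto
    have "recurrence_lhs n \<rho> x k = recurrence_lhs n \<rho> y k"
      using assms(2,3) False less.prems by (simp add: satisfies_rec_iff)
    moreover have "x (k - Suc j) = y (k - Suc j)" for j
      using less False p by simp
    ultimately show ?thesis
      unfolding p recurrence_lhs_Suc by simp
  qed (use assms(4) in simp)
qed

lemma satisfies_rec_closed_form:
  assumes "n \<ge> 1" "0 < \<rho>" "n \<le> t" "satisfies_rec n \<rho> t x v"
  shows "x t = (\<Sum>i<n. lagrP n i t * \<rho>^(t - i) * x i)
             + (\<Sum>m=n..t. real ((t - m + n - 1) choose (n - 1)) * \<rho>^(t - m) * v m)"
proof -
  have "x t = explicit_solution n \<rho> t x v t"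
    using assms by (intro satisfies_rec_unique[OF assms(1,4) satisfies_rec_explicit_solution])
      (simp_all add: explicit_solution_initial)
  also have "\<dots> = (\<Sum>i<n. lagrP n i t * \<rho>^(t - i) * x i)
             + (\<Sum>m=n..t. real ((t - m + n - 1) choose (n - 1)) * \<rho>^(t - m) * v m)"
    unfolding explicit_solution_def interpolant_def sum_distrib_left
  proof (intro arg_cong2[where f="(+)"] sum.cong)
    fix i assume "i \<in> {..<n}"
    then have "\<rho>^t = \<rho>^i * \<rho>^(t - i)"
      using assms(3) by (simp add: power_add[symmetric])
    then show "\<rho>^t * (x i / \<rho>^i * lagrange_basis n i (real t)) = lagrP n i t * \<rho>^(t - i) * x i"
      using assms(2) by (simp add: lagrP_eq_lagrange_basis)
  qed (simp_all add: impulse_response_def)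
  finally show ?thesis .
qed

section \<open>Estimates\<close>

lemma lagrP_mult_sign:
  assumes "i < n" "n \<le> t"
  shows "lagrP n i t * (-1)^(n - 1 - i) = \<bar>lagrP n i t\<bar>"
proof -
  have factor: "(real t - real j) / (real i - real j)
      = (if j < i then 1 else -1) * \<bar>(real t - real j) / (real i - real j)\<bar>"
    if "j \<in> {0..<n} - {i}" for j
  proof (cases "j < i")
    case False
    with that assms have "(real t - real j) / (real i - real j) < 0"
      by (auto intro!: divide_pos_neg)
    then have "\<bar>(real t - real j) / (real i - real j)\<bar> = - ((real t - real j) / (real i - real j))"
      by (rule abs_of_neg)
    then show ?thesis
      by (simp only: False if_False mult_minus1 minus_minus)
  qed (use that assms in auto)
  have "lagrP n i t = (\<Prod>j\<in>{0..<n} - {i}. if j < i then 1 else -1) * \<bar>lagrP n i t\<bar>"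
    unfolding lagrP_def abs_prod prod.distrib[symmetric] by (rule prod.cong[OF refl factor])
  also have "(\<Prod>j\<in>{0..<n} - {i}. if j < i then 1 else -1::real) = (-1)^(n - 1 - i)"
  proof -
    have "({0..<n} - {i}) \<inter> - {j. j < i} = {i<..<n}" by auto
    then show ?thesis by (simp add: prod.If_cases)
  qed
  finally have sign: "lagrP n i t = (-1)^(n - 1 - i) * \<bar>lagrP n i t\<bar>" .
  have "lagrP n i t * (-1)^(n - 1 - i) = \<bar>lagrP n i t\<bar> * ((-1)^(n - 1 - i) * (-1)^(n - 1 - i))"
    by (subst sign) (simp only: mult_ac)
  also have "\<dots> = \<bar>lagrP n i t\<bar>"
    by (simp flip: power_mult_distrib)
  finally show ?thesis .
qed

lemma abs_lagrP_le:
  assumes "i < n" "n \<le> k"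
  shows "\<bar>lagrP n i k\<bar> \<le> real k ^ (n - 1)"
proof -
  have "\<bar>lagrP n i k\<bar> = (\<Prod>j\<in>{0..<n} - {i}. \<bar>real k - real j\<bar> / \<bar>real i - real j\<bar>)"
    by (simp add: lagrP_def abs_prod abs_divide)
  also have "\<dots> \<le> (\<Prod>j\<in>{0..<n} - {i}. real k)"
  proof (rule prod_mono)
    fix j assume j: "j \<in> {0..<n} - {i}"
    then have "1 \<le> \<bar>real i - real j\<bar>" "\<bar>real k - real j\<bar> \<le> real k"
      using assms by auto
    then have "\<bar>real k - real j\<bar> / \<bar>real i - real j\<bar> \<le> \<bar>real k - real j\<bar> / 1"
      by (intro divide_left_mono) auto
    also have "\<dots> \<le> real k"
      using \<open>\<bar>real k - real j\<bar> \<le> real k\<close> by simp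
    finally have "\<bar>real k - real j\<bar> / \<bar>real i - real j\<bar> \<le> real k" .
    then show "0 \<le> \<bar>real k - real j\<bar> / \<bar>real i - real j\<bar> \<and> \<bar>real k - real j\<bar> / \<bar>real i - real j\<bar> \<le> real k"
      by simp
  qed
  also have "\<dots> = real k ^ (n - 1)"
    using assms by simp
  finally show ?thesis .
qed

lemma bdd_above_alpha_kn:
  assumes "0 < \<rho>" "\<rho> < 1"
  shows "bdd_above ((\<lambda>k. alpha_kn \<rho> k n) ` {n..})"
proof -
  have "(\<lambda>k. real k ^ q * \<rho>^k) \<longlonglongrightarrow> 0" for q
    using assms by real_asymp
  then have "Bseq (\<lambda>k. real k ^ (n - 1) * \<rho>^k)"
    by (intro convergent_imp_Bseq convergentI)
  then obtain B where "\<And>k. \<bar>real k ^ (n - 1) * \<rho>^k\<bar> \<le> B"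
    by (rule BseqE) auto
  then have B: "\<And>k. real k ^ (n - 1) * \<rho>^k \<le> B"
    using abs_ge_self order.trans by blast
  have "alpha_kn \<rho> k n \<le> real n * (B / \<rho>^(n - 1))" if "n \<le> k" for k
  proof -
    have "alpha_kn \<rho> k n \<le> (\<Sum>i<n. real k ^ (n - 1) * \<rho>^k / \<rho>^(n - 1))"
      unfolding alpha_kn_def
    proof (rule sum_mono)
      fix i assume "i \<in> {..<n}"
      then have "\<rho>^(k - i) = \<rho>^k / \<rho>^i"
        using that assms by (simp add: power_diff)
      also have "\<dots> \<le> \<rho>^k / \<rho>^(n - 1)"
        using \<open>i \<in> {..<n}\<close> assms by (intro divide_left_mono power_decreasing) auto
      finally have "\<rho>^(k - i) \<le> \<rho>^k / \<rho>^(n - 1)" .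
      then show "\<bar>lagrP n i k\<bar> * \<rho>^(k - i) \<le> real k ^ (n - 1) * \<rho>^k / \<rho>^(n - 1)"
        using abs_lagrP_le[of i n k] \<open>i \<in> {..<n}\<close> that assms
        by (simp add: mult_mono times_divide_eq_right[symmetric] del: times_divide_eq_right)
    qed
    also have "\<dots> = real n * (real k ^ (n - 1) * \<rho>^k / \<rho>^(n - 1))"
      by simp
    also have "\<dots> \<le> real n * (B / \<rho>^(n - 1))"
      using B[of k] assms by (intro mult_left_mono divide_right_mono) auto
    finally show ?thesis .
  qed
  then show ?thesis
    by (intro bdd_aboveI2) auto
qed

definition binomial_geometric_sum :: "real \<Rightarrow> nat \<Rightarrow> nat \<Rightarrow> real" where
  "binomial_geometric_sum \<rho> p N = (\<Sum>m\<le>N. real ((m + p) choose p) * \<rho>^m)"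

lemma binomial_geometric_sum_Suc:
  "(1 - \<rho>) * binomial_geometric_sum \<rho> (Suc p) N + real ((N + p + 1) choose (p + 1)) * \<rho>^(N + 1)
     = binomial_geometric_sum \<rho> p N"
proof (induction N)
  case (Suc N)
  have "real ((Suc N + p + 1) choose (p + 1))
      = real ((N + p + 1) choose p) + real ((N + p + 1) choose (p + 1))"
    by (simp add: choose_reduce_nat)
  with Suc show ?case
    by (simp add: binomial_geometric_sum_def algebra_simps)
qed (simp add: binomial_geometric_sum_def algebra_simps)

lemma binomial_geometric_sum_less:
  assumes "0 < \<rho>" "\<rho> < 1"
  shows "binomial_geometric_sum \<rho> p N < 1 / (1 - \<rho>)^Suc p"
proof (induction p)
  case 0
  have "binomial_geometric_sum \<rho> 0 N = (1 - \<rho>^Suc N) / (1 - \<rho>)"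
    using assms sum_gp_strict[of \<rho> "Suc N"]
    by (simp add: binomial_geometric_sum_def lessThan_Suc_atMost)
  also have "\<dots> < 1 / (1 - \<rho>)"
    using assms by (simp add: divide_strict_right_mono)
  finally show ?case by simp
next
  case (Suc p)
  have "(1 - \<rho>) * binomial_geometric_sum \<rho> (Suc p) N \<le> binomial_geometric_sum \<rho> p N"
  proof -
    have "0 \<le> real ((N + p + 1) choose (p + 1)) * \<rho>^(N + 1)"
      using assms by simp
    then show ?thesis
      using binomial_geometric_sum_Suc[of \<rho> p N] by linarith
  qed
  then have "binomial_geometric_sum \<rho> (Suc p) N \<le> binomial_geometric_sum \<rho> p N / (1 - \<rho>)"
    using assms by (simp add: field_simps)
  also have "\<dots> < 1 / (1 - \<rho>)^Suc p / (1 - \<rho>)"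
    by (rule divide_strict_right_mono[OF Suc]) (use assms in simp)
  finally show ?case by (simp add: mult_ac)
qed

lemma impulse_response_sum_less:
  assumes "n \<ge> 1" "n \<le> t" "0 < \<rho>" "\<rho> < 1"
  shows "(\<Sum>k=n..t. real ((t - k + n - 1) choose (n - 1)) * \<rho>^(t - k)) < 1 / (1 - \<rho>)^n"
proof -
  have "(\<Sum>k=n..t. real ((t - k + n - 1) choose (n - 1)) * \<rho>^(t - k))
      = binomial_geometric_sum \<rho> (n - 1) (t - n)"
    unfolding binomial_geometric_sum_def
    by (rule sum.reindex_bij_witness[of _ "\<lambda>m. t - m" "\<lambda>k. t - k"]) (use assms in auto)
  also have "\<dots> < 1 / (1 - \<rho>)^n"
    using binomial_geometric_sum_less[OF assms(3,4), of "n - 1"] assms(1) by simp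
  finally show ?thesis .
qed

lemma satisfies_rec_bound:
  assumes "n \<ge> 1" "0 < \<rho>" "n \<le> t" "satisfies_rec n \<rho> t x v"
    and "\<forall>i<n. \<bar>x i\<bar> \<le> 1" "\<forall>k. n \<le> k \<and> k \<le> t \<longrightarrow> \<bar>v k\<bar> \<le> \<epsilon>"
  shows "x t \<le> alpha_kn \<rho> t n + \<epsilon> * (\<Sum>k=n..t. real ((t - k + n - 1) choose (n - 1)) * \<rho>^(t - k))"
proof -
  have "(\<Sum>i<n. lagrP n i t * \<rho>^(t - i) * x i) \<le> alpha_kn \<rho> t n"
    unfolding alpha_kn_def
  proof (rule sum_mono)
    fix i assume "i \<in> {..<n}"
    have "lagrP n i t * \<rho>^(t - i) * x i \<le> \<bar>lagrP n i t * \<rho>^(t - i) * x i\<bar>"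
      by (rule abs_ge_self)
    also have "\<dots> = \<bar>lagrP n i t\<bar> * \<rho>^(t - i) * \<bar>x i\<bar>"
      using assms(2) by (simp add: abs_mult)
    also have "\<dots> \<le> \<bar>lagrP n i t\<bar> * \<rho>^(t - i)"
      using \<open>i \<in> {..<n}\<close> assms(2,5) by (simp add: mult_left_le)
    finally show "lagrP n i t * \<rho>^(t - i) * x i \<le> \<bar>lagrP n i t\<bar> * \<rho>^(t - i)" .
  qed
  moreover have "(\<Sum>k=n..t. real ((t - k + n - 1) choose (n - 1)) * \<rho>^(t - k) * v k)
      \<le> \<epsilon> * (\<Sum>k=n..t. real ((t - k + n - 1) choose (n - 1)) * \<rho>^(t - k))"
    unfolding sum_distrib_left
  proof (rule sum_mono)
    fix k assume "k \<in> {n..t}"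
    then have "v k \<le> \<epsilon>"
      using assms(6) by (auto dest: abs_le_D1)
    moreover have "0 \<le> real ((t - k + n - 1) choose (n - 1)) * \<rho>^(t - k)"
      using assms(2) by simp
    ultimately show "real ((t - k + n - 1) choose (n - 1)) * \<rho>^(t - k) * v k
        \<le> \<epsilon> * (real ((t - k + n - 1) choose (n - 1)) * \<rho>^(t - k))"
      by (metis mult.commute mult_left_mono)
  qed
  ultimately show ?thesis
    using satisfies_rec_closed_form[OF assms(1-4)] by linarith
qed

lemma satisfies_rec_bound_attained:
  assumes "n \<ge> 1" "0 < \<rho>" "n \<le> t" "satisfies_rec n \<rho> t x v"
    and "\<forall>i<n. x i = (-1)^(n - 1 - i)" "\<forall>k. n \<le> k \<and> k \<le> t \<longrightarrow> v k = \<epsilon>"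
  shows "x t = alpha_kn \<rho> t n + \<epsilon> * (\<Sum>k=n..t. real ((t - k + n - 1) choose (n - 1)) * \<rho>^(t - k))"
proof -
  have "(\<Sum>i<n. lagrP n i t * \<rho>^(t - i) * x i) = alpha_kn \<rho> t n"
    unfolding alpha_kn_def
  proof (rule sum.cong)
    fix i assume "i \<in> {..<n}"
    then have "i < n" by simp
    then have "lagrP n i t * \<rho>^(t - i) * x i = (lagrP n i t * (-1)^(n - 1 - i)) * \<rho>^(t - i)"
      using assms(5) by (simp only: mult_ac)
    also have "\<dots> = \<bar>lagrP n i t\<bar> * \<rho>^(t - i)"
      by (simp only: lagrP_mult_sign[OF \<open>i < n\<close> assms(3)])
    finally show "lagrP n i t * \<rho>^(t - i) * x i = \<bar>lagrP n i t\<bar> * \<rho>^(t - i)" .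
  qed simp
  moreover have "(\<Sum>k=n..t. real ((t - k + n - 1) choose (n - 1)) * \<rho>^(t - k) * v k)
      = \<epsilon> * (\<Sum>k=n..t. real ((t - k + n - 1) choose (n - 1)) * \<rho>^(t - k))"
    unfolding sum_distrib_left
  proof (rule sum.cong)
    fix k assume "k \<in> {n..t}"
    then show "real ((t - k + n - 1) choose (n - 1)) * \<rho>^(t - k) * v k
        = \<epsilon> * (real ((t - k + n - 1) choose (n - 1)) * \<rho>^(t - k))"
      using assms(6) by (simp only: atLeastAtMost_iff mult_ac)
  qed simp
  ultimately show ?thesis
    using satisfies_rec_closed_form[OF assms(1-4)] by linarith
qed

theorem theorem2p3:
  fixes n t :: nat and \<rho> \<epsilon> :: real
  assumes "n \<ge> 1" and "0 < \<rho>" and "\<rho> < 1" and "\<epsilon> > 0" and "t \<ge> n"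
  defines "val \<equiv> alpha_kn \<rho> t n
      + \<epsilon> * (\<Sum>k=n..t. real ((t - k + n - 1) choose (n - 1)) * \<rho> ^ (t - k))"
  shows "(let S = {x t | x v. satisfies_rec n \<rho> t x v
                              \<and> (\<forall>i<n. \<bar>x i\<bar> \<le> 1)
                              \<and> (\<forall>k. n \<le> k \<and> k \<le> t \<longrightarrow> \<bar>v k\<bar> \<le> \<epsilon>)}
           in val \<in> S \<and> (\<forall>y\<in>S. y \<le> val))
         \<and> (\<forall>x v. satisfies_rec n \<rho> t x v
              \<and> (\<forall>i<n. x i = (-1) ^ (n - 1 - i))
              \<and> (\<forall>k. n \<le> k \<and> k \<le> t \<longrightarrow> v k = \<epsilon>)
              \<longrightarrow> x t = val)
         \<and> val < alpha_n \<rho> n + \<epsilon> / (1 - \<rho>) ^ n"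
proof -
  define x\<^sub>0 where "x\<^sub>0 = explicit_solution n \<rho> t (\<lambda>i. (-1)^(n - 1 - i)) (\<lambda>_. \<epsilon>)"
  have x\<^sub>0: "satisfies_rec n \<rho> t x\<^sub>0 (\<lambda>_. \<epsilon>)" "\<forall>i<n. x\<^sub>0 i = (-1)^(n - 1 - i)"
    using assms(1,2) by (simp_all add: x\<^sub>0_def satisfies_rec_explicit_solution explicit_solution_initial)
  have extremal: "x t = val"
    if "satisfies_rec n \<rho> t x v" "\<forall>i<n. x i = (-1)^(n - 1 - i)"
      "\<forall>k. n \<le> k \<and> k \<le> t \<longrightarrow> v k = \<epsilon>" for x v
    unfolding val_def using satisfies_rec_bound_attained[OF assms(1,2,5) that] .
  have upper: "x t \<le> val"
    if "satisfies_rec n \<rho> t x v" "\<forall>i<n. \<bar>x i\<bar> \<le> 1"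
      "\<forall>k. n \<le> k \<and> k \<le> t \<longrightarrow> \<bar>v k\<bar> \<le> \<epsilon>" for x v
    unfolding val_def using satisfies_rec_bound[OF assms(1,2,5) that] .
  have "val \<in> {x t | x v. satisfies_rec n \<rho> t x v \<and> (\<forall>i<n. \<bar>x i\<bar> \<le> 1)
                              \<and> (\<forall>k. n \<le> k \<and> k \<le> t \<longrightarrow> \<bar>v k\<bar> \<le> \<epsilon>)}"
    using x\<^sub>0 extremal[OF x\<^sub>0] assms(4)
    by (intro CollectI exI[of _ x\<^sub>0] exI[of _ "\<lambda>_. \<epsilon>"]) auto
  moreover have "alpha_kn \<rho> t n \<le> alpha_n \<rho> n"
    unfolding alpha_n_def using assms(5) bdd_above_alpha_kn[OF assms(2,3)] by (intro cSUP_upper) auto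
  moreover have "\<epsilon> * (\<Sum>k=n..t. real ((t - k + n - 1) choose (n - 1)) * \<rho> ^ (t - k)) < \<epsilon> / (1 - \<rho>)^n"
    using mult_strict_left_mono[OF impulse_response_sum_less[OF assms(1,5,2,3)] assms(4)] by simp
  ultimately show ?thesis
    unfolding Let_def using upper extremal by (auto simp: val_def)
qed

end
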